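(* Let $P$ be an $(\epsilon_1,\epsilon_2)$-significant instance of $k$-means clustering with $z$ outliers and let $\eta,\delta,\xi\in(0,1)$. If one uniformly selects a set $S$ of $\max\{\frac{3k}{\delta^2\epsilon_1}\log\frac{2k}{\eta},\frac{k}{2\xi^2\epsilon_1(1-\delta)}\log\frac{2k}{\eta}\}$ points at random from $P$, then with probability at least $(1-\eta)^2$, for every $1\le j\le k$, $$\sum_{q\in S\cap C^*_j}\|q-o^*_j\|^2\le(1+\delta)\frac{|S|}{n}\Big(\sum_{p\in C^*_j}\|p-o^*_j\|^2+\xi|C^*_j|\mathcal{L}^2\Big).$$
   Context: $P\subset\mathbb{R}^D$, $|P|=n$, $0<z<n$. $P_{opt}\subset P$ with $|P_{opt}|=n-z$ is the set of inliers of an optimal solution of $k$-means clustering with $z$ outliers, and $C^*_1,\dots,C^*_k$ are the optimal clusters forming $P_{opt}$; $o^*_j$ is the mean of $C^*_j$; $\mathcal{L}=\max_l\max_{p,q\in C^*_l}\|p-q\|$. The instance is $(\epsilon_1,\epsilon_2)$-significant ($\epsilon_1,\epsilon_2>0$) if $\min_j|C^*_j|\ge\frac{\epsilon_1}{k}n$ and $z=\frac{\epsilon_2}{k}n$. Sampling uniformly at random means each sample point is drawn independently and uniformly from $P$; $S$ is a multiset and sums over $S\cap C^*_j$ count multiplicity. *)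

theory Defs
  imports "HOL-Analysis.Analysis" "HOL-Probability.Probability"
begin

definition mean :: "'a::euclidean_space set \<Rightarrow> 'a" where
  "mean C = (1 / real (card C)) *\<^sub>R (\<Sum>p\<in>C. p)"

definition sse :: "'a::euclidean_space set \<Rightarrow> real" where
  "sse C = (\<Sum>p\<in>C. (norm (p - mean C))^2)"

definition is_k_clustering :: "nat \<Rightarrow> 'a set \<Rightarrow> (nat \<Rightarrow> 'a set) \<Rightarrow> bool" where
  "is_k_clustering k Q D \<longleftrightarrow>
     (\<Union>j\<in>{1..k}. D j) = Q \<and>
     (\<forall>i\<in>{1..k}. \<forall>j\<in>{1..k}. i \<noteq> j \<longrightarrow> D i \<inter> D j = {})"

definition kmeans_outliers_opt ::
  "'a::euclidean_space set \<Rightarrow> nat \<Rightarrow> nat \<Rightarrow> 'a set \<Rightarrow> (nat \<Rightarrow> 'a set) \<Rightarrow> bool" where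
  "kmeans_outliers_opt P k z Popt C \<longleftrightarrow>
     Popt \<subseteq> P \<and> card Popt = card P - z \<and> is_k_clustering k Popt C \<and>
     (\<forall>Q D. Q \<subseteq> P \<longrightarrow> card Q = card P - z \<longrightarrow> is_k_clustering k Q D \<longrightarrow>
        (\<Sum>j\<in>{1..k}. sse (C j)) \<le> (\<Sum>j\<in>{1..k}. sse (D j)))"

definition max_diam :: "nat \<Rightarrow> (nat \<Rightarrow> 'a::euclidean_space set) \<Rightarrow> real" where
  "max_diam k C = Max {dist p q | p q l. l \<in> {1..k} \<and> p \<in> C l \<and> q \<in> C l}"

definition significant ::
  "'a::euclidean_space set \<Rightarrow> nat \<Rightarrow> nat \<Rightarrow> (nat \<Rightarrow> 'a set) \<Rightarrow> real \<Rightarrow> real \<Rightarrow> bool" where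
  "significant P k z C \<epsilon>1 \<epsilon>2 \<longleftrightarrow>
     \<epsilon>1 > 0 \<and> \<epsilon>2 > 0 \<and>
     (\<forall>j\<in>{1..k}. real (card (C j)) \<ge> \<epsilon>1 / real k * real (card P)) \<and>
     real z = \<epsilon>2 / real k * real (card P)"

text \<open>Uniform sampling of m points independently and uniformly from P:
  the uniform distribution on all m-tuples of points of P.\<close>
definition sample_pmf :: "'a set \<Rightarrow> nat \<Rightarrow> (nat \<Rightarrow> 'a) pmf" where
  "sample_pmf P m = pmf_of_set (PiE {..<m} (\<lambda>_. P))"

end

theory Submission
  imports Defs
begin

(* Fix a cluster C_j and put X(p) = ||p - o_j||^2 for p in C_j and X(p) = 0 otherwise.  The cost of
   the sample inside C_j is the sum of m independent copies of X, and X takes values in [0, L^2]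
   because every point of C_j lies within L of the mean.  The Chernoff bound, with the moment
   generating function estimated through convexity of exp, gives Bernstein's inequality; since
   |C_j| >= eps1 n / k, the choice of m makes the probability that the cost exceeds
   (1 + delta) (m/n) (sum_{C_j} ||p - o_j||^2 + xi |C_j| L^2) at most exp(-A) = eta / (2k).
   A union bound over the k clusters leaves probability at least 1 - eta/2 >= (1 - eta)^2. *)

lemma one_minus_mult_exp_le: "(1 - u) * exp u \<le> (1::real)"
proof -
  have "(1 - u) * exp u \<le> exp (-u) * exp u"
    using exp_ge_add_one_self[of "-u"] by (intro mult_right_mono) auto
  then show ?thesis by (simp add: exp_minus)
qed

lemma two_minus_mult_exp_le:
  assumes "0 \<le> (u::real)"
  shows "(2 - u) * exp u \<le> 2 + u"
proof -
  let ?f = "\<lambda>x::real. x + 2 + (x - 2) * exp x"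
  have "?f 0 \<le> ?f u"
  proof (rule DERIV_nonneg_imp_nondecreasing[OF assms])
    fix x :: real
    have "DERIV ?f x :> 1 + (x - 1) * exp x"
      by (rule derivative_eq_intros refl | simp add: algebra_simps)+
    moreover have "0 \<le> 1 + (x - 1) * exp x"
      using one_minus_mult_exp_le[of x] by (simp add: algebra_simps)
    ultimately show "\<exists>y. DERIV ?f x :> y \<and> 0 \<le> y" by blast
  qed
  then show ?thesis by (simp add: algebra_simps)
qed

lemma exp_remainder_le:
  assumes "0 \<le> (u::real)"
  shows "(1 - u/3) * (exp u - 1 - u) \<le> u^2 / 2"
proof -
  let ?f = "\<lambda>x::real. 3 * x^2 - 2 * (3 - x) * (exp x - 1 - x)"
  have "?f 0 \<le> ?f u"
  proof (rule DERIV_nonneg_imp_nondecreasing[OF assms])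
    fix x :: real
    assume "0 \<le> x"
    have "DERIV ?f x :> 2 * (x + 2 - (2 - x) * exp x)"
      by (rule derivative_eq_intros refl | simp add: algebra_simps)+
    moreover have "0 \<le> 2 * (x + 2 - (2 - x) * exp x)"
      using two_minus_mult_exp_le[OF \<open>0 \<le> x\<close>] by simp
    ultimately show "\<exists>y. DERIV ?f x :> y \<and> 0 \<le> y" by blast
  qed
  then show ?thesis by (simp add: field_simps)
qed

lemma bernstein_exponent_bound:
  fixes \<mu> \<Delta> :: real
  assumes "0 \<le> \<mu>" "0 < \<Delta>"
  shows "\<exists>u\<ge>0. \<mu> * (exp u - 1) - u * (\<mu> + \<Delta>) \<le> - (\<Delta>^2 / (2 * (\<mu> + \<Delta>/3)))"
proof -
  define s where "s = \<mu> + \<Delta>/3"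
  define u where "u = \<Delta> / s"
  have s: "0 < s" and "\<mu> = (1 - u/3) * s"
    using assms by (auto simp: s_def u_def field_simps)
  have u: "0 \<le> u" using s assms by (simp add: u_def)
  have "\<mu> * (exp u - 1 - u) \<le> s * (u^2 / 2)"
    using mult_left_mono[OF exp_remainder_le[OF u], of s] s
    by (simp add: \<open>\<mu> = _\<close> mult.assoc)
  also have "\<dots> = \<Delta>^2 / (2 * s)" using s by (simp add: u_def power2_eq_square)
  finally have "\<mu> * (exp u - 1) - u * (\<mu> + \<Delta>) \<le> \<Delta>^2 / (2 * s) - u * \<Delta>"
    by (simp add: algebra_simps)
  also have "\<dots> = - (\<Delta>^2 / (2 * s))" using s by (simp add: u_def field_simps power2_eq_square)
  finally show ?thesis using u unfolding s_def by blast
qed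

lemma le_of_sample_bounds:
  fixes M A \<delta> \<xi> :: real
  assumes "0 < \<delta>" "\<delta> < 1" "0 < \<xi>" "0 < A"
    and A_le: "A \<le> M * \<delta>^2 / 3" "A \<le> 2 * \<xi>^2 * (1 - \<delta>) * M"
  shows "A \<le> 9/11 * (\<delta> * \<xi> * M)"
proof -
  have "0 < M * \<delta>^2" using A_le(1) \<open>0 < A\<close> by linarith
  then have M: "0 < M" by (simp add: zero_less_mult_iff)
  have "A^2 \<le> (M * \<delta>^2 / 3) * (2 * \<xi>^2 * (1 - \<delta>) * M)"
    unfolding power2_eq_square[of A] using \<open>0 < A\<close> A_le M by (intro mult_mono) auto
  also have "\<dots> \<le> (M * \<delta>^2 / 3) * (2 * \<xi>^2 * M)"
    using assms M by (intro mult_left_mono) auto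
  also have "\<dots> = 2/3 * (\<delta> * \<xi> * M)^2"
    by (simp add: power_mult_distrib power2_eq_square)
  also have "\<dots> \<le> 81/121 * (\<delta> * \<xi> * M)^2"
    by (intro mult_right_mono) auto
  also have "\<dots> = (9/11 * (\<delta> * \<xi> * M))^2"
    by (simp add: power_mult_distrib power_divide)
  finally show ?thesis
    by (rule power2_le_imp_le) (use assms M in simp)
qed

(* With A <= 9/11 delta xi M and 4 (delta mu) (xi M) <= Delta^2 (AM-GM), the two parts of
   2 A (mu + Delta/3) are at most 18/44 and 24/44 of Delta^2. *)
lemma bernstein_exponent_relative_ge:
  fixes \<mu> M A \<delta> \<xi> :: real
  assumes "0 \<le> \<mu>" "\<mu> \<le> M" "0 < \<delta>" "\<delta> < 1" "0 < \<xi>"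
    and A_le: "A \<le> M * \<delta>^2 / 3" "A \<le> 2 * \<xi>^2 * (1 - \<delta>) * M"
  defines "\<Delta> \<equiv> \<delta> * \<mu> + (1 + \<delta>) * \<xi> * M"
  shows "A \<le> \<Delta>^2 / (2 * (\<mu> + \<Delta>/3))"
proof (cases "A \<le> 0")
  case True
  have "0 \<le> \<Delta>" using assms by (simp add: \<Delta>_def)
  then show ?thesis using \<open>0 \<le> \<mu>\<close> by (intro order.trans[OF True] divide_nonneg_nonneg) auto
next
  case False
  then have A: "A \<le> 9/11 * (\<delta> * \<xi> * M)"
    using le_of_sample_bounds assms(3-5) A_le by simp
  have "0 < M * \<delta>^2" using False A_le(1) by linarith
  then have "0 < M" by (simp add: zero_less_mult_iff)
  have sum_le: "\<delta> * \<mu> + \<xi> * M \<le> \<Delta>" and \<xi>M: "\<xi> * M \<le> \<Delta>"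
    using assms \<open>0 < M\<close> by (auto simp: \<Delta>_def algebra_simps)
  have "4 * (\<delta> * \<mu>) * (\<xi> * M) \<le> (\<delta> * \<mu> + \<xi> * M)^2"
    using sum_squares_ge_zero[of "\<delta> * \<mu> - \<xi> * M" 0] by (simp add: power2_eq_square algebra_simps)
  also have "\<dots> \<le> \<Delta>^2"
    using sum_le assms \<open>0 < M\<close> by (intro power_mono) auto
  finally have product: "4 * (\<delta> * \<mu>) * (\<xi> * M) \<le> \<Delta>^2" .
  have "A * (2 * \<mu>) \<le> 9/11 * (\<delta> * \<xi> * M) * (2 * \<mu>)"
    using A assms by (intro mult_right_mono) auto
  also have "\<dots> \<le> 18/44 * \<Delta>^2"
    using product by (simp add: algebra_simps)
  finally have "A * (2 * \<mu>) \<le> 18/44 * \<Delta>^2" .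
  moreover have "A * (2 * \<Delta> / 3) \<le> 24/44 * \<Delta>^2"
  proof -
    have "\<delta> * (\<xi> * M) \<le> 1 * \<Delta>"
      using \<xi>M assms \<open>0 < M\<close> by (intro mult_mono) auto
    then have "A \<le> 9/11 * \<Delta>" using A by (simp add: mult.assoc)
    then have "A * (2 * \<Delta> / 3) \<le> 9/11 * \<Delta> * (2 * \<Delta> / 3)"
      using \<xi>M assms \<open>0 < M\<close> by (intro mult_right_mono) auto
    then show ?thesis by (simp add: power2_eq_square)
  qed
  ultimately have "A * (2 * \<mu>) + A * (2 * \<Delta> / 3) \<le> \<Delta>^2"
    using zero_le_power2[of \<Delta>] by linarith
  then have "A * (2 * (\<mu> + \<Delta>/3)) \<le> \<Delta>^2"
    by (simp add: algebra_simps)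
  moreover have "0 < 2 * (\<mu> + \<Delta>/3)"
    using \<xi>M \<open>0 < M\<close> assms by (simp add: add_nonneg_pos)
  ultimately show ?thesis by (simp add: field_simps)
qed

lemma card_sum_gt_le_exp_moment:
  fixes X :: "'a \<Rightarrow> real"
  assumes "finite P" "0 \<le> l"
  shows "real (card {S \<in> PiE {..<m} (\<lambda>_. P). t < (\<Sum>i<m. X (S i))})
           \<le> exp (- (l * t)) * (\<Sum>x\<in>P. exp (l * X x))^m"
proof -
  define \<Omega> where "\<Omega> = PiE {..<m} (\<lambda>_. P)"
  have "finite \<Omega>" unfolding \<Omega>_def using assms by (simp add: finite_PiE)
  have "real (card {S \<in> \<Omega>. t < (\<Sum>i<m. X (S i))}) = (\<Sum>S | S \<in> \<Omega> \<and> t < (\<Sum>i<m. X (S i)). 1)"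
    by simp
  also have "\<dots> \<le> (\<Sum>S | S \<in> \<Omega> \<and> t < (\<Sum>i<m. X (S i)). exp (l * ((\<Sum>i<m. X (S i)) - t)))"
    using assms(2) by (intro sum_mono) simp
  also have "\<dots> \<le> (\<Sum>S\<in>\<Omega>. exp (l * ((\<Sum>i<m. X (S i)) - t)))"
    using \<open>finite \<Omega>\<close> by (intro sum_mono2) auto
  also have "\<dots> = exp (- (l * t)) * (\<Sum>S\<in>\<Omega>. \<Prod>i<m. exp (l * X (S i)))"
  proof -
    have "exp (l * ((\<Sum>i<m. X (S i)) - t)) = exp (- (l * t)) * (\<Prod>i<m. exp (l * X (S i)))" for S
      by (simp add: right_diff_distrib sum_distrib_left exp_diff exp_minus exp_sum field_simps)
    then show ?thesis by (simp add: sum_distrib_left)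
  qed
  also have "(\<Sum>S\<in>\<Omega>. \<Prod>i<m. exp (l * X (S i))) = (\<Prod>i<m. \<Sum>x\<in>P. exp (l * X x))"
    unfolding \<Omega>_def by (rule prod_sum_PiE[symmetric]) (use assms in auto)
  finally show ?thesis by (simp add: \<Omega>_def)
qed

lemma sum_exp_le_card_mult_exp:
  fixes X :: "'a \<Rightarrow> real"
  assumes "finite P" "P \<noteq> {}" "\<forall>x\<in>P. 0 \<le> X x \<and> X x \<le> D" "0 < D"
  shows "(\<Sum>x\<in>P. exp (l * X x))
           \<le> real (card P) * exp ((\<Sum>x\<in>P. X x) * (exp (l * D) - 1) / (real (card P) * D))"
proof -
  define n where "n = real (card P)"
  have n: "0 < n" unfolding n_def using assms by (simp add: card_gt_0_iff)
  have chord: "exp (l * X x) \<le> 1 + X x / D * (exp (l * D) - 1)" if "x \<in> P" for x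
  proof -
    define a where "a = X x / D"
    have a: "0 \<le> a" "a \<le> 1" using assms that by (auto simp: a_def)
    have "exp ((1 - a) *\<^sub>R 0 + a *\<^sub>R (l * D)) \<le> (1 - a) * exp 0 + a * exp (l * D)"
      by (rule convex_onD[OF exp_convex]) (use a in auto)
    moreover have "(1 - a) *\<^sub>R 0 + a *\<^sub>R (l * D) = l * X x"
      using assms by (simp add: a_def)
    ultimately show ?thesis by (simp add: a_def algebra_simps)
  qed
  have "(\<Sum>x\<in>P. exp (l * X x)) \<le> (\<Sum>x\<in>P. 1 + X x / D * (exp (l * D) - 1))"
    using chord by (rule sum_mono)
  also have "\<dots> = n + (\<Sum>x\<in>P. X x) * (exp (l * D) - 1) / D"
    by (simp add: n_def sum.distrib sum_distrib_right sum_divide_distrib)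
  also have "\<dots> = n * (1 + (\<Sum>x\<in>P. X x) * (exp (l * D) - 1) / (n * D))"
    using n assms(4) by (simp add: field_simps)
  also have "\<dots> \<le> n * exp ((\<Sum>x\<in>P. X x) * (exp (l * D) - 1) / (n * D))"
    using n by (intro mult_left_mono) auto
  finally show ?thesis unfolding n_def .
qed

lemma bernstein_card:
  fixes X :: "'a \<Rightarrow> real" and m :: nat
  assumes "finite P" "P \<noteq> {}" "\<forall>x\<in>P. 0 \<le> X x \<and> X x \<le> D" "0 < D" "0 < \<Delta>"
  defines "\<mu> \<equiv> real m * (\<Sum>x\<in>P. X x) / (real (card P) * D)"
  shows "real (card {S \<in> PiE {..<m} (\<lambda>_. P). (\<mu> + \<Delta>) * D < (\<Sum>i<m. X (S i))})
           \<le> exp (- (\<Delta>^2 / (2 * (\<mu> + \<Delta>/3)))) * real (card P) ^ m"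
proof -
  define n where "n = real (card P)"
  have n: "0 < n" unfolding n_def using assms by (simp add: card_gt_0_iff)
  have "0 \<le> (\<Sum>x\<in>P. X x)" using assms(3) by (intro sum_nonneg) auto
  then have "0 \<le> \<mu>" using assms(4) by (simp add: \<mu>_def)
  then obtain u where "0 \<le> u"
    and u: "\<mu> * (exp u - 1) - u * (\<mu> + \<Delta>) \<le> - (\<Delta>^2 / (2 * (\<mu> + \<Delta>/3)))"
    using bernstein_exponent_bound \<open>0 < \<Delta>\<close> by blast
  define l where "l = u / D"
  have "0 \<le> l" using \<open>0 \<le> u\<close> assms(4) by (simp add: l_def)
  have "real (card {S \<in> PiE {..<m} (\<lambda>_. P). (\<mu> + \<Delta>) * D < (\<Sum>i<m. X (S i))})
        \<le> exp (- (l * ((\<mu> + \<Delta>) * D))) * (\<Sum>x\<in>P. exp (l * X x))^m"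
    by (rule card_sum_gt_le_exp_moment[OF assms(1) \<open>0 \<le> l\<close>])
  also have "\<dots> \<le> exp (- (l * ((\<mu> + \<Delta>) * D)))
                   * (n * exp ((\<Sum>x\<in>P. X x) * (exp (l * D) - 1) / (n * D)))^m"
    using sum_exp_le_card_mult_exp[OF assms(1-4)]
    by (intro mult_left_mono power_mono) (auto simp: n_def intro: sum_nonneg)
  also have "\<dots> = n^m * exp (\<mu> * (exp u - 1) - u * (\<mu> + \<Delta>))"
    using assms(4)
    by (simp add: l_def \<mu>_def n_def power_mult_distrib exp_of_nat_mult[symmetric]
        exp_diff exp_minus field_simps)
  also have "\<dots> \<le> n^m * exp (- (\<Delta>^2 / (2 * (\<mu> + \<Delta>/3))))"
    using u n by (intro mult_left_mono) auto
  finally show ?thesis by (simp add: n_def mult.commute)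
qed

lemma card_sum_gt_relative_le:
  fixes X :: "'a \<Rightarrow> real"
  assumes "finite P" "P \<noteq> {}" "\<forall>x\<in>P. 0 \<le> X x \<and> X x \<le> D" "(\<Sum>x\<in>P. X x) \<le> c * D"
    and "0 < \<delta>" "\<delta> < 1" "0 < \<xi>" "0 < A"
    and "A \<le> (real m * c / real (card P)) * \<delta>^2 / 3"
    and "A \<le> 2 * \<xi>^2 * (1 - \<delta>) * (real m * c / real (card P))"
  shows "real (card {S \<in> PiE {..<m} (\<lambda>_. P).
            (1 + \<delta>) * (real m / real (card P)) * ((\<Sum>x\<in>P. X x) + \<xi> * c * D)
              < (\<Sum>i<m. X (S i))})
         \<le> exp (- A) * real (card P) ^ m"
  (is "real (card {S \<in> _. ?t < _}) \<le> _")
proof (cases "D = 0")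
  case True
  then have X0: "X x = 0" if "x \<in> P" for x using assms(3) that by force
  have "(\<Sum>i<m. X (S i)) = 0" if "S \<in> PiE {..<m} (\<lambda>_. P)" for S
    using that X0 by (auto simp: PiE_iff intro!: sum.neutral)
  moreover have "(\<Sum>x\<in>P. X x) = 0" using X0 by simp
  ultimately have empty: "{S \<in> PiE {..<m} (\<lambda>_. P). ?t < (\<Sum>i<m. X (S i))} = {}"
    using True by auto
  show ?thesis unfolding empty by simp
next
  case False
  then have D: "0 < D" using assms(2,3) by force
  define n where "n = real (card P)"
  have n: "0 < n" unfolding n_def using assms by (simp add: card_gt_0_iff)
  define M where "M = real m * c / n"
  define \<mu> where "\<mu> = real m * (\<Sum>x\<in>P. X x) / (n * D)"
  define \<Delta> where "\<Delta> = \<delta> * \<mu> + (1 + \<delta>) * \<xi> * M"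
  have "0 \<le> (\<Sum>x\<in>P. X x)" using assms(3) by (intro sum_nonneg) auto
  then have "0 \<le> \<mu>" using n D by (simp add: \<mu>_def)
  have "real m * (\<Sum>x\<in>P. X x) / (n * D) \<le> real m * (c * D) / (n * D)"
    using assms(4) n D by (intro divide_right_mono mult_left_mono) auto
  then have "\<mu> \<le> M" using D by (simp add: \<mu>_def M_def)
  have "0 < M * \<delta>^2 / 3" unfolding M_def n_def using assms(8,9) by linarith
  then have "0 < M" by (simp add: zero_less_mult_iff)
  then have "0 < \<Delta>" using \<open>0 \<le> \<mu>\<close> assms(5,7) by (simp add: \<Delta>_def add_nonneg_pos)
  have A: "A \<le> \<Delta>^2 / (2 * (\<mu> + \<Delta>/3))"
    unfolding \<Delta>_def using bernstein_exponent_relative_ge[OF \<open>0 \<le> \<mu>\<close> \<open>\<mu> \<le> M\<close> assms(5-7)] assms(9,10)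
    by (simp add: M_def n_def)
  have "?t = (\<mu> + \<Delta>) * D"
    using n D by (simp add: \<mu>_def \<Delta>_def M_def n_def field_simps)
  then have "real (card {S \<in> PiE {..<m} (\<lambda>_. P). ?t < (\<Sum>i<m. X (S i))})
             \<le> exp (- (\<Delta>^2 / (2 * (\<mu> + \<Delta>/3)))) * n ^ m"
    using bernstein_card[OF assms(1-3) D \<open>0 < \<Delta>\<close>] by (simp add: \<mu>_def n_def)
  also have "\<dots> \<le> exp (- A) * n ^ m"
    using A n by (intro mult_right_mono) auto
  finally show ?thesis by (simp add: n_def)
qed

lemma norm_minus_mean_le:
  fixes C :: "'a::euclidean_space set"
  assumes "finite C" "C \<noteq> {}" "\<forall>p\<in>C. norm (x - p) \<le> L"
  shows "norm (x - mean C) \<le> L"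
proof -
  define c where "c = real (card C)"
  have c: "0 < c" unfolding c_def using assms by (simp add: card_gt_0_iff)
  have "x - mean C = (1 / c) *\<^sub>R (\<Sum>p\<in>C. x - p)"
    unfolding mean_def c_def[symmetric] using c
    by (simp add: sum_subtractf scaleR_diff_right c_def sum_constant_scaleR)
  then have "norm (x - mean C) = (1 / c) * norm (\<Sum>p\<in>C. x - p)"
    using c by simp
  also have "\<dots> \<le> (1 / c) * (\<Sum>p\<in>C. norm (x - p))"
    using c by (intro mult_left_mono norm_sum) auto
  also have "\<dots> \<le> (1 / c) * (c * L)"
    using c assms unfolding c_def by (intro mult_left_mono sum_bounded_above[where K = L, simplified]) auto
  finally show ?thesis using c by simp
qed

lemma dist_le_max_diam:
  assumes "finite P" "\<forall>l\<in>{1..k}. C l \<subseteq> P" "l \<in> {1..k}" "p \<in> C l" "q \<in> C l"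
  shows "dist p q \<le> max_diam k C"
proof -
  have "{dist p q | p q l. l \<in> {1..k} \<and> p \<in> C l \<and> q \<in> C l} \<subseteq> (\<lambda>(p, q). dist p q) ` (P \<times> P)"
    using assms(2) by fastforce
  then have "finite {dist p q | p q l. l \<in> {1..k} \<and> p \<in> C l \<and> q \<in> C l}"
    using assms(1) by (meson finite_SigmaI finite_imageI finite_subset)
  then show ?thesis unfolding max_diam_def using assms(3-5) by (intro Max_ge) blast+
qed

lemma card_cluster_cost_gt_le:
  fixes P C :: "'a::euclidean_space set" and m :: nat
  assumes "finite P" "C \<subseteq> P" "C \<noteq> {}" "\<forall>p\<in>C. \<forall>q\<in>C. dist p q \<le> L"
    and "0 < \<delta>" "\<delta> < 1" "0 < \<xi>" "0 < A"
    and "A \<le> (real m * real (card C) / real (card P)) * \<delta>^2 / 3"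
    and "A \<le> 2 * \<xi>^2 * (1 - \<delta>) * (real m * real (card C) / real (card P))"
  shows "real (card {S \<in> PiE {..<m} (\<lambda>_. P).
            (1 + \<delta>) * (real m / real (card P))
              * (sse C + \<xi> * real (card C) * L^2)
            < (\<Sum>i\<in>{i. i < m \<and> S i \<in> C}. (norm (S i - mean C))^2)})
         \<le> exp (- A) * real (card P) ^ m"
proof -
  define X where "X x = (if x \<in> C then (norm (x - mean C))^2 else 0)" for x
  have "finite C" using assms(1,2) by (rule finite_subset[rotated])
  have X_bounds: "\<forall>x\<in>P. 0 \<le> X x \<and> X x \<le> L^2"
  proof
    fix x assume "x \<in> P"
    show "0 \<le> X x \<and> X x \<le> L^2"
    proof (cases "x \<in> C")
      case True
      then have "norm (x - mean C) \<le> L"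
        using norm_minus_mean_le[OF \<open>finite C\<close> assms(3)] assms(4) by (simp add: dist_norm)
      then show ?thesis using True by (simp add: X_def power_mono)
    qed (simp add: X_def)
  qed
  have sum_X: "(\<Sum>x\<in>P. X x) = sse C"
    using assms(1,2) by (simp add: X_def sse_def sum.If_cases Int_absorb1)
  have "sse C \<le> (\<Sum>p\<in>C. L^2)"
    unfolding sse_def
    using X_bounds assms(2) by (intro sum_mono) (auto simp: X_def subset_iff split: if_splits)
  then have "(\<Sum>x\<in>P. X x) \<le> real (card C) * L^2" by (simp add: sum_X)
  moreover have "(\<Sum>i\<in>{i. i < m \<and> S i \<in> C}. (norm (S i - mean C))^2) = (\<Sum>i<m. X (S i))" for S
    by (simp add: X_def sum.If_cases Collect_conj_eq lessThan_def Int_commute)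
  moreover have "P \<noteq> {}" using assms(2,3) by blast
  ultimately show ?thesis
    using card_sum_gt_relative_le[OF assms(1) _ X_bounds _ assms(5-10)] by (simp add: sum_X)
qed

lemma sample_size_relative_bounds:
  fixes m c n k \<epsilon>1 \<delta> \<xi> A :: real
  assumes "0 < \<epsilon>1" "0 < k" "0 < n" "\<epsilon>1 / k * n \<le> c" "0 < \<delta>" "\<delta> < 1" "0 < \<xi>" "0 \<le> A"
    and m1: "3 * k / (\<delta>^2 * \<epsilon>1) * A \<le> m"
    and m2: "k / (2 * \<xi>^2 * \<epsilon>1 * (1 - \<delta>)) * A \<le> m"
  shows "A \<le> m * c / n * \<delta>^2 / 3" "A \<le> 2 * \<xi>^2 * (1 - \<delta>) * (m * c / n)"
proof -
  have "0 \<le> 3 * k / (\<delta>^2 * \<epsilon>1) * A" using assms(1,2,8) by simp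
  then have "0 \<le> m" using m1 by linarith
  have "\<epsilon>1 / k \<le> c / n" using assms(3,4) by (simp add: pos_le_divide_eq)
  then have r: "m * (\<epsilon>1 / k) \<le> m * (c / n)" using \<open>0 \<le> m\<close> by (rule mult_left_mono)
  have "A = (3 * k / (\<delta>^2 * \<epsilon>1) * A) * (\<epsilon>1 / k * \<delta>^2 / 3)"
    using assms(1,2,5) by (simp add: field_simps)
  also have "\<dots> \<le> m * (\<epsilon>1 / k * \<delta>^2 / 3)"
    using m1 assms(1,2) by (intro mult_right_mono) auto
  also have "\<dots> = m * (\<epsilon>1 / k) * \<delta>^2 / 3" by simp
  also have "\<dots> \<le> m * (c / n) * \<delta>^2 / 3"
    using r by (intro divide_right_mono mult_right_mono) auto
  finally show "A \<le> m * c / n * \<delta>^2 / 3" by simp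
  have "A = 2 * \<xi>^2 * (1 - \<delta>) * ((k / (2 * \<xi>^2 * \<epsilon>1 * (1 - \<delta>)) * A) * (\<epsilon>1 / k))"
    using assms(1,2,6,7) by (simp add: field_simps)
  also have "\<dots> \<le> 2 * \<xi>^2 * (1 - \<delta>) * (m * (\<epsilon>1 / k))"
    using m2 assms(1,2,6) by (intro mult_left_mono mult_right_mono) auto
  also have "\<dots> \<le> 2 * \<xi>^2 * (1 - \<delta>) * (m * (c / n))"
    by (rule mult_left_mono[OF r]) (use assms(6) in simp)
  finally show "A \<le> 2 * \<xi>^2 * (1 - \<delta>) * (m * c / n)" by simp
qed

lemma prob_pmf_of_set_all_le:
  fixes f t :: "'j \<Rightarrow> 'b \<Rightarrow> real"
  assumes "finite \<Omega>" "\<Omega> \<noteq> {}" "finite J"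
    and "\<forall>j\<in>J. real (card {S \<in> \<Omega>. t j S < f j S}) \<le> b * real (card \<Omega>)"
  shows "1 - real (card J) * b \<le> measure_pmf.prob (pmf_of_set \<Omega>) {S. \<forall>j\<in>J. f j S \<le> t j S}"
proof -
  let ?prob = "measure_pmf.prob (pmf_of_set \<Omega>)"
  let ?bad = "\<lambda>j. {S. t j S < f j S}"
  have "?prob (\<Union>j\<in>J. ?bad j) \<le> (\<Sum>j\<in>J. ?prob (?bad j))"
    using assms(3) by (rule measure_pmf.finite_measure_subadditive_finite) auto
  also have "\<dots> \<le> (\<Sum>j\<in>J. b)"
  proof (rule sum_mono)
    fix j assume "j \<in> J"
    have "?prob (?bad j) = real (card {S \<in> \<Omega>. t j S < f j S}) / real (card \<Omega>)"
      using assms(1,2) by (simp add: measure_pmf_of_set Int_def)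
    then show "?prob (?bad j) \<le> b"
      using assms(1,2,4) \<open>j \<in> J\<close> by (simp add: pos_divide_le_eq card_gt_0_iff)
  qed
  finally have "?prob (\<Union>j\<in>J. ?bad j) \<le> real (card J) * b" by simp
  moreover have "{S. \<forall>j\<in>J. f j S \<le> t j S} = space (measure_pmf (pmf_of_set \<Omega>)) - (\<Union>j\<in>J. ?bad j)"
    by (auto simp: not_less)
  ultimately show ?thesis
    using measure_pmf.prob_compl[of "\<Union>j\<in>J. ?bad j" "pmf_of_set \<Omega>"] by simp
qed

lemma prob_sample_cluster_costs_le:
  fixes P :: "'a::euclidean_space set" and C :: "'j \<Rightarrow> 'a set" and m :: nat
  assumes "finite P" "P \<noteq> {}" "finite J"
    and clusters: "\<forall>j\<in>J. C j \<subseteq> P \<and> C j \<noteq> {} \<and> (\<forall>p\<in>C j. \<forall>q\<in>C j. dist p q \<le> L)"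
    and "0 < \<delta>" "\<delta> < 1" "0 < \<xi>" "0 < A"
    and sizes: "\<forall>j\<in>J. A \<le> (real m * real (card (C j)) / real (card P)) * \<delta>^2 / 3
                     \<and> A \<le> 2 * \<xi>^2 * (1 - \<delta>) * (real m * real (card (C j)) / real (card P))"
  shows "1 - real (card J) * exp (- A)
           \<le> measure_pmf.prob (sample_pmf P m)
               {S. \<forall>j\<in>J. (\<Sum>i\<in>{i. i < m \<and> S i \<in> C j}. (norm (S i - mean (C j)))^2)
                          \<le> (1 + \<delta>) * (real m / real (card P))
                             * (sse (C j) + \<xi> * real (card (C j)) * L^2)}"
  unfolding sample_pmf_def
proof (rule prob_pmf_of_set_all_le, goal_cases)
  case 1
  show ?case using assms(1) by (simp add: finite_PiE)
next
  case 2
  show ?case using assms(2) by (simp add: PiE_eq_empty_iff)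
next
  case 3
  show ?case by fact
next
  case 4
  have "card (PiE {..<m} (\<lambda>_. P)) = card P ^ m" by (simp add: card_PiE)
  then show ?case
    by (simp only: of_nat_power, intro ballI card_cluster_cost_gt_le assms(1,5-8))
      (use clusters sizes in auto)
qed

lemma significant_clusters:
  assumes "finite P" "0 < card P" "k \<ge> 1"
    and "kmeans_outliers_opt P k z Popt C" "significant P k z C \<epsilon>1 \<epsilon>2"
  shows "\<forall>j\<in>{1..k}. C j \<subseteq> P \<and> C j \<noteq> {} \<and> (\<forall>p\<in>C j. \<forall>q\<in>C j. dist p q \<le> max_diam k C)"
proof -
  have subset: "\<forall>l\<in>{1..k}. C l \<subseteq> P"
    using assms(4) unfolding kmeans_outliers_opt_def is_k_clustering_def by blast
  have "0 < \<epsilon>1" and large: "\<forall>j\<in>{1..k}. \<epsilon>1 / real k * real (card P) \<le> real (card (C j))"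
    using assms(5) unfolding significant_def by auto
  then have "0 < \<epsilon>1 / real k * real (card P)" using assms(2,3) by simp
  then have "C j \<noteq> {}" if "j \<in> {1..k}" for j
    using large that by (metis card.empty not_le of_nat_0)
  then show ?thesis using subset dist_le_max_diam[OF assms(1) subset] by blast
qed

lemma significant_sample_size_bounds:
  assumes "0 < card P" "k \<ge> 1" "significant P k z C \<epsilon>1 \<epsilon>2"
    and "0 < \<eta>" "\<eta> < 1" "0 < \<delta>" "\<delta> < 1" "0 < \<xi>"
    and "m = nat \<lceil>max (3 * real k / (\<delta>^2 * \<epsilon>1) * ln (2 * real k / \<eta>))
                      (real k / (2 * \<xi>^2 * \<epsilon>1 * (1 - \<delta>)) * ln (2 * real k / \<eta>))\<rceil>"
  defines "A \<equiv> ln (2 * real k / \<eta>)"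
  shows "\<forall>j\<in>{1..k}. A \<le> (real m * real (card (C j)) / real (card P)) * \<delta>^2 / 3
                   \<and> A \<le> 2 * \<xi>^2 * (1 - \<delta>) * (real m * real (card (C j)) / real (card P))"
proof -
  have "0 < \<epsilon>1" and large: "\<forall>j\<in>{1..k}. \<epsilon>1 / real k * real (card P) \<le> real (card (C j))"
    using assms(3) unfolding significant_def by auto
  have "0 \<le> A" using assms(2,4,5) by (simp add: A_def field_simps)
  have m_ge: "3 * real k / (\<delta>^2 * \<epsilon>1) * A \<le> real m"
    "real k / (2 * \<xi>^2 * \<epsilon>1 * (1 - \<delta>)) * A \<le> real m"
    unfolding assms(9) A_def by (meson max.cobounded1 max.cobounded2 real_nat_ceiling_ge order_trans)+
  show ?thesis
    by (intro ballI conjI sample_size_relative_bounds[OF \<open>0 < \<epsilon>1\<close> _ _ _ assms(6-8) \<open>0 \<le> A\<close> m_ge])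
      (use large assms(1,2) in auto)
qed

theorem lemma4:
  fixes P :: "'a::euclidean_space set" and k z :: nat and Popt :: "'a set"
    and C :: "nat \<Rightarrow> 'a set" and \<epsilon>1 \<epsilon>2 \<eta> \<delta> \<xi> :: real and m :: nat
  assumes "finite P" and "0 < z" and "z < card P" and "k \<ge> 1"
    and "kmeans_outliers_opt P k z Popt C"
    and "significant P k z C \<epsilon>1 \<epsilon>2"
    and "0 < \<eta>" "\<eta> < 1" "0 < \<delta>" "\<delta> < 1" "0 < \<xi>" "\<xi> < 1"
    and "m = nat \<lceil>max (3 * real k / (\<delta>^2 * \<epsilon>1) * ln (2 * real k / \<eta>))
                      (real k / (2 * \<xi>^2 * \<epsilon>1 * (1 - \<delta>)) * ln (2 * real k / \<eta>))\<rceil>"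
  shows "measure_pmf.prob (sample_pmf P m)
           {S. \<forall>j\<in>{1..k}.
              (\<Sum>i\<in>{i. i < m \<and> S i \<in> C j}. (norm (S i - mean (C j)))^2)
              \<le> (1 + \<delta>) * (real m / real (card P)) *
                 ((\<Sum>p\<in>C j. (norm (p - mean (C j)))^2)
                  + \<xi> * real (card (C j)) * (max_diam k C)^2)}
         \<ge> (1 - \<eta>)^2"
proof -
  have "0 < card P" using assms(3) by linarith
  then have "P \<noteq> {}" by auto
  define A where "A = ln (2 * real k / \<eta>)"
  have "0 < A" using assms(4,7,8) by (simp add: A_def ln_gt_zero_iff field_simps)
  have "(1 - \<eta>)^2 \<le> 1 - real (card {1..k}) * exp (- A)"
    using assms(4,7,8) by (simp add: A_def exp_minus power2_eq_square field_simps mult_left_le_one_le)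
  also note prob_sample_cluster_costs_le[OF assms(1) \<open>P \<noteq> {}\<close> finite_atLeastAtMost
      significant_clusters[OF assms(1) \<open>0 < card P\<close> assms(4-6)] assms(9-11) \<open>0 < A\<close>
      significant_sample_size_bounds[OF \<open>0 < card P\<close> assms(4,6-11,13), folded A_def]]
  finally show ?thesis by (simp only: sse_def)
qed

end
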